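(* Let $\lambda$ and $\lambda'$ be Young diagrams with $n$ boxes such that $\lambda'\ge\lambda$. Then $M_{\lambda',2l}\ge M_{\lambda,2l}$ for every integer $l\ge 0$.
   Context: For a Young diagram $\lambda=(\lambda_1,\dots,\lambda_m)$ with $\lambda_1\ge\dots\ge\lambda_m\ge 1$, $\sum\lambda_i=n$, and an integer $l\ge 0$, define $M_{\lambda,2l}=\sum_{j=1}^m\big\{(\lambda_j-j)^l(\lambda_j-j+1)^l-j^l(j-1)^l\big\}$. For Young diagrams $\lambda,\lambda'$ with $n$ boxes, $\lambda'\ge\lambda$ means that $\lambda'$ can be obtained from $\lambda$ by a finite sequence of moves, each of which removes the last box of some row $b$ and appends it to the end of some row $a<b$, every intermediate shape being a Young diagram (i.e. moving boxes up to the right; the dominance order). *)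

theory Defs
  imports Main
begin

text \<open>A Young diagram is represented by the list of its row lengths
  (lambda_1, ..., lambda_m), nonincreasing, all entries at least 1.\<close>
definition young :: "nat list \<Rightarrow> bool" where
  "young lam \<longleftrightarrow> sorted_wrt (\<ge>) lam \<and> (\<forall>x\<in>set lam. x \<ge> 1)"

definition boxes :: "nat list \<Rightarrow> nat" where
  "boxes lam = sum_list lam"

text \<open>One elementary move (0-based row indices a < b): remove the last box of row b
  and append it to row a; the resulting shape (dropping an emptied row) must be a
  Young diagram, i.e. the row lengths stay nonincreasing with zeros only at the end.\<close>
definition move :: "nat list \<Rightarrow> nat list \<Rightarrow> bool" where
  "move lam mu \<longleftrightarrow> (\<exists>a b. a < b \<and> b < length lam \<and>
     (let nu = lam[a := lam ! a + 1, b := lam ! b - 1] in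
        sorted_wrt (\<ge>) nu \<and> mu = filter (\<lambda>x. x > 0) nu))"

text \<open>lam' \<ge> lam in the dominance order: lam' is reachable from lam by finitely many moves.\<close>
definition dom_ge :: "nat list \<Rightarrow> nat list \<Rightarrow> bool" where
  "dom_ge lam' lam \<longleftrightarrow> move\<^sup>*\<^sup>* lam lam'"

definition M :: "nat list \<Rightarrow> nat \<Rightarrow> int" where
  "M lam l = (\<Sum>j=1..length lam.
      (int (lam ! (j - 1)) - int j) ^ l * (int (lam ! (j - 1)) - int j + 1) ^ l
      - int j ^ l * (int j - 1) ^ l)"

end

theory Submission
  imports Defs
begin

text \<open>
  Write \<open>F x = (x (x + 1))^l\<close>.  Row \<open>j\<close> (counted from 0) of length \<open>x\<close>
  contributes \<open>F (x - j - 1) - F (-j - 1)\<close> to \<open>M\<close>, so appending a box to row \<open>a\<close> raises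
  \<open>M\<close> by \<open>D c\<close>, where \<open>D c = F c - F (c - 1)\<close> and \<open>c = \<lambda>\<^sub>a - a\<close> is the content of the new
  box; removing the last box of row \<open>b\<close> lowers \<open>M\<close> by \<open>D c'\<close> with \<open>c' = \<lambda>\<^sub>b - b - 1\<close> its
  content.  For \<open>a < b\<close> and \<open>\<lambda>\<^sub>a \<ge> \<lambda>\<^sub>b\<close> we have \<open>c > c'\<close>, so a single move cannot
  decrease \<open>M\<close> once \<open>D\<close> is known to be monotone.

  Monotonicity of \<open>D\<close>: on \<open>c \<ge> 0\<close> it follows from the fact that increments of
  \<open>t \<mapsto> t^l\<close> grow along the nonnegative, convex sequence \<open>(c - 1) c, c (c + 1), \<dots>\<close>;
  since \<open>F (-x - 1) = F x\<close>, \<open>D\<close> is odd, which extends monotonicity to all integers.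
\<close>

definition rise :: "nat \<Rightarrow> int \<Rightarrow> int" where
  "rise l x = (x * (x + 1)) ^ l"

text \<open>The change of \<open>M\<close> caused by a box of content \<open>c\<close>.\<close>
definition rise_diff :: "nat \<Rightarrow> int \<Rightarrow> int" where
  "rise_diff l c = rise l c - rise l (c - 1)"

lemma power_increment_mono:
  fixes u v w :: "'a :: linordered_idom"
  assumes "0 \<le> u" "u \<le> v" "v \<le> w" "v - u \<le> w - v"
  shows "v ^ l - u ^ l \<le> w ^ l - v ^ l"
proof -
  have left: "v ^ l - u ^ l = (v - u) * (\<Sum>i<l. u ^ (l - Suc i) * v ^ i)"
    by (rule power_diff_sumr2)
  have right: "w ^ l - v ^ l = (w - v) * (\<Sum>i<l. v ^ (l - Suc i) * w ^ i)"
    by (rule power_diff_sumr2)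
  have sums: "(\<Sum>i<l. u ^ (l - Suc i) * v ^ i) \<le> (\<Sum>i<l. v ^ (l - Suc i) * w ^ i)"
    using assms by (intro sum_mono mult_mono power_mono) auto
  have "0 \<le> (\<Sum>i<l. u ^ (l - Suc i) * v ^ i)"
    using assms by (intro sum_nonneg) auto
  with sums assms have "(v - u) * (\<Sum>i<l. u ^ (l - Suc i) * v ^ i)
      \<le> (w - v) * (\<Sum>i<l. v ^ (l - Suc i) * w ^ i)"
    by (intro mult_mono) auto
  with left right show ?thesis by simp
qed

lemma rise_diff_step_nonneg:
  assumes "0 \<le> c"
  shows "rise_diff l c \<le> rise_diff l (c + 1)"
proof -
  have "0 \<le> (c - 1) * c"
    using assms by (cases "c = 0") simp_all
  moreover have "(c - 1) * c \<le> c * (c + 1)" "c * (c + 1) \<le> (c + 1) * (c + 1 + 1)"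
    "c * (c + 1) - (c - 1) * c \<le> (c + 1) * (c + 1 + 1) - c * (c + 1)"
    using assms by (simp_all add: algebra_simps)
  ultimately have "(c * (c + 1)) ^ l - ((c - 1) * c) ^ l
      \<le> ((c + 1) * (c + 1 + 1)) ^ l - (c * (c + 1)) ^ l"
    by (rule power_increment_mono)
  thus ?thesis unfolding rise_diff_def rise_def by simp
qed

text \<open>The symmetry \<open>x \<leftrightarrow> -x - 1\<close> of \<open>x (x + 1)\<close> makes \<open>rise_diff\<close> an odd function.\<close>
lemma rise_reflect: "rise l (- x - 1) = rise l x"
  unfolding rise_def by (simp add: algebra_simps)

lemma rise_diff_odd: "rise_diff l (- c) = - rise_diff l c"
  using rise_reflect[of l "c - 1"] rise_reflect[of l c] unfolding rise_diff_def by simp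

lemma rise_diff_step: "rise_diff l c \<le> rise_diff l (c + 1)"
proof (cases "0 \<le> c")
  case True
  thus ?thesis by (rule rise_diff_step_nonneg)
next
  case False
  hence "rise_diff l (- c - 1) \<le> rise_diff l (- c - 1 + 1)"
    by (intro rise_diff_step_nonneg) simp
  thus ?thesis using rise_diff_odd[of l "c + 1"] rise_diff_odd[of l c] by simp
qed

lemma rise_diff_mono:
  assumes "x \<le> y"
  shows "rise_diff l x \<le> rise_diff l y"
  using assms
proof (induction y rule: int_ge_induct)
  case (step i)
  thus ?case using rise_diff_step[of l i] by simp
qed simp

text \<open>The contribution of row \<open>j\<close> (0-based) of length \<open>x\<close> to \<open>M\<close>.\<close>
definition row_term :: "nat \<Rightarrow> nat \<Rightarrow> nat \<Rightarrow> int" where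
  "row_term l x j = rise l (int x - int j - 1) - rise l (- int j - 1)"

lemma M_summand_eq_row_term:
  "(int x - int (Suc j)) ^ l * (int x - int (Suc j) + 1) ^ l
      - int (Suc j) ^ l * (int (Suc j) - 1) ^ l = row_term l x j"
proof -
  have "(int x - int (Suc j)) * (int x - int (Suc j) + 1)
      = (int x - int j - 1) * (int x - int j - 1 + 1)"
    by simp
  hence first: "(int x - int (Suc j)) ^ l * (int x - int (Suc j) + 1) ^ l
      = rise l (int x - int j - 1)"
    unfolding rise_def power_mult_distrib[symmetric] by (rule arg_cong)
  have "(- int j - 1) * (- int j - 1 + 1) = int (Suc j) * (int (Suc j) - 1)"
    by (simp add: algebra_simps)
  hence second: "int (Suc j) ^ l * (int (Suc j) - 1) ^ l = rise l (- int j - 1)"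
    unfolding rise_def power_mult_distrib[symmetric] by simp
  show ?thesis unfolding row_term_def first second ..
qed

lemma M_row_sum: "M lam l = (\<Sum>j<length lam. row_term l (lam ! j) j)"
proof -
  have "M lam l = (\<Sum>j\<in>Suc ` {..<length lam}.
      (int (lam ! (j - 1)) - int j) ^ l * (int (lam ! (j - 1)) - int j + 1) ^ l
      - int j ^ l * (int j - 1) ^ l)"
    unfolding M_def image_Suc_lessThan ..
  also have "\<dots> = (\<Sum>j<length lam.
      (int (lam ! j) - int (Suc j)) ^ l * (int (lam ! j) - int (Suc j) + 1) ^ l
      - int (Suc j) ^ l * (int (Suc j) - 1) ^ l)"
    by (subst sum.reindex) (auto simp only: inj_on_def comp_def diff_Suc_1 nat.inject)
  also have "\<dots> = (\<Sum>j<length lam. row_term l (lam ! j) j)"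
    by (simp only: M_summand_eq_row_term)
  finally show ?thesis .
qed

lemma sum_list_update:
  fixes g :: "'a \<Rightarrow> nat \<Rightarrow> 'b :: ab_group_add"
  assumes "i < length xs"
  shows "(\<Sum>j<length xs. g (xs[i := v] ! j) j)
       = (\<Sum>j<length xs. g (xs ! j) j) + g v i - g (xs ! i) i"
proof -
  have rest: "(\<Sum>j\<in>{..<length xs} - {i}. g (xs[i := v] ! j) j)
      = (\<Sum>j\<in>{..<length xs} - {i}. g (xs ! j) j)"
    by (rule sum.cong) auto
  show ?thesis
    using assms rest sum.remove[of "{..<length xs}" i "\<lambda>j. g (xs[i := v] ! j) j"]
      sum.remove[of "{..<length xs}" i "\<lambda>j. g (xs ! j) j"]
    by (simp add: algebra_simps)
qed

text \<open>Empty rows contribute nothing, so trailing zeros do not change \<open>M\<close>.\<close>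
lemma M_append_zeros:
  assumes "\<forall>y\<in>set ys. y = 0"
  shows "M (xs @ ys) l = M xs l"
proof -
  have "(\<Sum>j\<in>{length xs..<length xs + length ys}. row_term l ((xs @ ys) ! j) j) = 0"
  proof (intro sum.neutral ballI)
    fix j assume "j \<in> {length xs..<length xs + length ys}"
    hence "(xs @ ys) ! j = 0" using assms by (auto simp: nth_append)
    thus "row_term l ((xs @ ys) ! j) j = 0" by (simp add: row_term_def)
  qed
  moreover have "(\<Sum>j<length xs + length ys. row_term l ((xs @ ys) ! j) j)
      = (\<Sum>j<length xs. row_term l ((xs @ ys) ! j) j)
        + (\<Sum>j\<in>{length xs..<length xs + length ys}. row_term l ((xs @ ys) ! j) j)"
    unfolding lessThan_atLeast0 by (rule sum.atLeastLessThan_concat[symmetric]) simp_all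
  ultimately show ?thesis by (simp add: M_row_sum nth_append)
qed

text \<open>A nonincreasing list is its positive part followed by zeros; dropping the emptied
  rows after a move therefore leaves \<open>M\<close> unchanged.\<close>
lemma M_filter_positive:
  assumes "sorted_wrt (\<ge>) (xs :: nat list)"
  shows "M (filter (\<lambda>x. x > 0) xs) l = M xs l"
proof -
  have split: "xs = filter (\<lambda>x. x > 0) xs @ filter (\<lambda>x. \<not> x > 0) xs"
    using assms
  proof (induction xs)
    case (Cons x xs)
    show ?case
    proof (cases "x > 0")
      case False
      with Cons.prems have "\<forall>y\<in>set xs. y = 0" by auto
      with False show ?thesis by (simp add: filter_empty_conv filter_id_conv)
    qed (use Cons in simp)
  qed simp
  have "M (filter (\<lambda>x. x > 0) xs @ filter (\<lambda>x. \<not> x > 0) xs) l = M (filter (\<lambda>x. x > 0) xs) l"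
    by (rule M_append_zeros) simp
  thus ?thesis using split by metis
qed

lemma move_young:
  assumes "move lam mu"
  shows "young mu"
  using assms unfolding move_def young_def Let_def by (auto simp: sorted_wrt_filter)

lemma move_M_mono:
  assumes "young lam" "move lam mu"
  shows "M lam l \<le> M mu l"
proof -
  obtain a b where ab: "a < b" "b < length lam"
    and sorted: "sorted_wrt (\<ge>) (lam[a := lam ! a + 1, b := lam ! b - 1])"
    and mu: "mu = filter (\<lambda>x. x > 0) (lam[a := lam ! a + 1, b := lam ! b - 1])"
    using assms(2) unfolding move_def Let_def by blast
  have lb: "lam ! b \<ge> 1" and lab: "lam ! a \<ge> lam ! b"
    using assms(1) ab unfolding young_def by (auto simp: sorted_wrt_iff_nth_less)
  have gain_a: "row_term l (lam ! a + 1) a - row_term l (lam ! a) a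
      = rise_diff l (int (lam ! a) - int a)"
    unfolding row_term_def rise_diff_def by simp
  have loss_b: "row_term l (lam ! b) b - row_term l (lam ! b - 1) b
      = rise_diff l (int (lam ! b) - int b - 1)"
    unfolding row_term_def rise_diff_def using lb by (simp add: of_nat_diff algebra_simps)
  have "M (lam[a := lam ! a + 1, b := lam ! b - 1]) l
      = M lam l + rise_diff l (int (lam ! a) - int a)
        - rise_diff l (int (lam ! b) - int b - 1)"
    using ab sum_list_update[of b "lam[a := lam ! a + 1]" "row_term l" "lam ! b - 1"]
      sum_list_update[of a lam "row_term l" "lam ! a + 1"] gain_a loss_b
    unfolding M_row_sum by simp
  moreover have "rise_diff l (int (lam ! b) - int b - 1) \<le> rise_diff l (int (lam ! a) - int a)"
    using lab ab by (intro rise_diff_mono) simp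
  ultimately show ?thesis
    unfolding mu M_filter_positive[OF sorted] by simp
qed

theorem lemma5p9:
  fixes lam lam' :: "nat list" and n l :: nat
  assumes "young lam" and "young lam'"
    and "boxes lam = n" and "boxes lam' = n"
    and "dom_ge lam' lam"
  shows "M lam' l \<ge> M lam l"
proof -
  have "move\<^sup>*\<^sup>* lam lam'" using assms(5) unfolding dom_ge_def .
  hence "young lam' \<and> M lam l \<le> M lam' l"
  proof (induction rule: rtranclp_induct)
    case (step mu nu)
    thus ?case using move_young[of mu nu] move_M_mono[of mu nu l] by auto
  qed (use assms(1) in simp)
  thus ?thesis by simp
qed

end
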